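(* Let $\mathbf V$ be a monoid variety satisfying $xtx\approx xtx^2$. If $\mathbf V$ contains $\mathbb M_\lambda(ata^+)$ but does not contain $\mathbf K=\mathbb M_\lambda(bta^+b^+)$, then $\mathbf V$ satisfies $xty^2x\approx xty^2xyx$.
   Context: Words are elements of the free monoid $\mathfrak A^*$ over a countably infinite alphabet. Let $\tau_1$ be the congruence on $\mathfrak A^*$ generated by $a=aa$ for all letters $a$. Define $\mathbf u\,\lambda\,\mathbf v$ iff $\mathbf u\,\tau_1\,\mathbf v$, $\mathbf u,\mathbf v$ have the same set of multiple (occurring at least twice) letters, and for each multiple letter its first two occurrences are adjacent in $\mathbf u$ iff they are adjacent in $\mathbf v$. For $\lambda$-classes, $\mathtt v\le\mathtt u$ iff $\mathtt u=\mathtt p\mathtt v\mathtt s$ in $\mathfrak A^*/\lambda$. For a set $\mathtt W$ of $\lambda$-classes, $M_\lambda(\mathtt W)$ is the Rees quotient of $\mathfrak A^*/\lambda$ by the ideal of classes not $\le$ any element of $\mathtt W$, and $\mathbb M_\lambda(\mathtt W)$ is the monoid variety it generates. Here $ata^+$ denotes the $\lambda$-class $\{ata^k:k\ge1\}$ and $bta^+b^+$ denotes the $\lambda$-class $\{bta^kb^m:k\ge2,m\ge1\}$. *)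

theory Defs
  imports "HOL-Algebra.Group"
begin

type_synonym word = "nat list"

inductive tau1 :: "word \<Rightarrow> word \<Rightarrow> bool" where
  tau1_base: "tau1 [a] [a, a]"
| tau1_refl: "tau1 u u"
| tau1_sym: "tau1 u v \<Longrightarrow> tau1 v u"
| tau1_trans: "tau1 u v \<Longrightarrow> tau1 v w \<Longrightarrow> tau1 u w"
| tau1_ctx: "tau1 u v \<Longrightarrow> tau1 (p @ u @ s) (p @ v @ s)"

definition mult_letters :: "word \<Rightarrow> nat set" where
  "mult_letters u = {x. count_list u x \<ge> 2}"

definition first_two_adj :: "nat \<Rightarrow> word \<Rightarrow> bool" where
  "first_two_adj x u \<longleftrightarrow> (\<exists>p s. u = p @ [x, x] @ s \<and> x \<notin> set p)"

definition lam :: "word \<Rightarrow> word \<Rightarrow> bool" where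
  "lam u v \<longleftrightarrow> tau1 u v \<and> mult_letters u = mult_letters v
     \<and> (\<forall>x \<in> mult_letters u. first_two_adj x u \<longleftrightarrow> first_two_adj x v)"

definition lam_class :: "word \<Rightarrow> word set" where
  "lam_class u = {v. lam u v}"

definition lam_mult :: "word set \<Rightarrow> word set \<Rightarrow> word set" where
  "lam_mult X Y = lam_class ((SOME u. u \<in> X) @ (SOME v. v \<in> Y))"

definition lam_le :: "word set \<Rightarrow> word set \<Rightarrow> bool" where
  "lam_le V U \<longleftrightarrow> (\<exists>p s v. v \<in> V \<and> U = lam_class (p @ v @ s))"

text \<open>Rees quotient M_lambda(W): the nonzero elements are the lambda-classes below
  some element of W (as Some X), the zero is None.\<close>
definition below_W :: "word set set \<Rightarrow> word set \<Rightarrow> bool" where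
  "below_W W X \<longleftrightarrow> (\<exists>U \<in> W. lam_le X U)"

definition M_lam :: "word set set \<Rightarrow> word set option monoid" where
  "M_lam W = \<lparr> carrier = {None} \<union> Some ` {X. (\<exists>u. X = lam_class u) \<and> below_W W X},
      mult = (\<lambda>a b. case (a, b) of
                 (Some X, Some Y) \<Rightarrow>
                    (if below_W W (lam_mult X Y) then Some (lam_mult X Y) else None)
               | _ \<Rightarrow> None),
      one = Some (lam_class []) \<rparr>"

definition eval_word :: "('a, 'b) monoid_scheme \<Rightarrow> (nat \<Rightarrow> 'a) \<Rightarrow> word \<Rightarrow> 'a" where
  "eval_word M \<phi> w = foldr (\<lambda>a r. \<phi> a \<otimes>\<^bsub>M\<^esub> r) w \<one>\<^bsub>M\<^esub>"

definition sat_id :: "('a, 'b) monoid_scheme \<Rightarrow> word \<times> word \<Rightarrow> bool" where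
  "sat_id M e \<longleftrightarrow> (\<forall>\<phi>. (\<forall>a. \<phi> a \<in> carrier M) \<longrightarrow>
       eval_word M \<phi> (fst e) = eval_word M \<phi> (snd e))"

text \<open>A monoid variety is represented by its equational theory (Birkhoff):
  a fully invariant congruence on the free monoid of words.
  V satisfies u \<approx> v iff (u,v) \<in> E; V contains M iff M satisfies every identity in E.\<close>
definition subst_word :: "(nat \<Rightarrow> word) \<Rightarrow> word \<Rightarrow> word" where
  "subst_word \<sigma> w = concat (map \<sigma> w)"

definition equational_theory :: "(word \<times> word) set \<Rightarrow> bool" where
  "equational_theory E \<longleftrightarrow>
     (\<forall>u. (u, u) \<in> E) \<and>
     (\<forall>u v. (u, v) \<in> E \<longrightarrow> (v, u) \<in> E) \<and>
     (\<forall>u v w. (u, v) \<in> E \<longrightarrow> (v, w) \<in> E \<longrightarrow> (u, w) \<in> E) \<and>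
     (\<forall>u v p s. (u, v) \<in> E \<longrightarrow> (p @ u @ s, p @ v @ s) \<in> E) \<and>
     (\<forall>u v \<sigma>. (u, v) \<in> E \<longrightarrow> (subst_word \<sigma> u, subst_word \<sigma> v) \<in> E)"

definition variety_contains :: "(word \<times> word) set \<Rightarrow> ('a, 'b) monoid_scheme \<Rightarrow> bool" where
  "variety_contains E M \<longleftrightarrow> (\<forall>e \<in> E. sat_id M e)"

text \<open>Letters: a = 0, t = 1, b = 2 (and x = 0, t = 1, y = 2 in identities).\<close>
definition ata_plus :: "word set" where
  "ata_plus = {[0, 1, 0] @ replicate k 0 | k. True}"

definition btab_plus :: "word set" where
  "btab_plus = {[2, 1] @ replicate k 0 @ replicate m 2 | k m. k \<ge> 2 \<and> m \<ge> 1}"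

end

theory Submission
  imports Defs
begin

(*
  Since K = M_lam(bta+b+) is not in V, some identity of V fails in K.  Reading an assignment into
  K as a substitution, this yields an identity x = y of V where x is a factor of a word in
  bta+b+ and y either is not such a factor or is not lam-equivalent to x.

  Because M_lam(ata+) is in V, every substitution mapping x onto a factor of ata+ preserves
  the lam-class of x.  Two such substitutions suffice: erase b, and erase a while renaming b
  to a.  On factors of words in bta+b+ these two images determine the lam-class, so y is not
  a factor.  Completing x to a word L of bta+b+ gives an identity L = w of V with w outside
  bta+b+, and the same two images force w = btu with u over {a, b} containing at least two
  a's and one b, and (since w is not in bta+b+) not of the form a..ab..b.

  Now xtx = xtxx allows squaring or unsquaring any factor after its first occurrence; in
  particular z^3 = z^2.  Substituting t -> taa in bta^k b^m = btu and collapsing both sides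
  yields btaab = btaabab, which is the claimed identity up to renaming a and b.
*)

lemma count_list_replicate: "count_list (replicate n a) x = (if a = x then n else 0)"
  by (induction n) auto

lemma remdups_adj_append_remdups_adj_left:
  "remdups_adj (remdups_adj xs @ ys) = remdups_adj (xs @ ys)"
proof (induction xs rule: remdups_adj.induct)
  case (3 x y xs)
  then show ?case
  proof (cases "x = y")
    case False
    obtain r where r: "remdups_adj (y # xs) = y # r"
      by (metis remdups_adj_Cons_alt)
    have "remdups_adj (x # remdups_adj (y # xs) @ ys) = x # remdups_adj (remdups_adj (y # xs) @ ys)"
      using False r by simp
    then show ?thesis using False 3 by simp
  qed simp
qed (auto simp: remdups_adj_Cons)

lemma remdups_adj_append_remdups_adj_right:
  "remdups_adj (xs @ remdups_adj ys) = remdups_adj (xs @ ys)"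
  using remdups_adj_append_remdups_adj_left[of "rev ys" "rev xs"]
  by (metis remdups_adj_rev rev_append rev_rev_ident)

lemma remdups_adj_eq_ConsE:
  assumes "remdups_adj z = c # r"
  obtains i z' where "0 < i" "z = replicate i c @ z'" "remdups_adj z' = r"
proof -
  obtain z0 where z: "z = c # z0"
    using assms by (cases z) (auto simp: remdups_adj_Cons split: list.splits if_splits)
  define z' where "z' = dropWhile (\<lambda>x. x = c) z0"
  have "remdups_adj (c # z0) = c # remdups_adj z'"
    unfolding z'_def by (rule remdups_adj_Cons')
  then have "remdups_adj z' = r"
    using assms z by simp
  moreover have "takeWhile (\<lambda>x. x = c) z0 = replicate (length (takeWhile (\<lambda>x. x = c) z0)) c"
    by (metis (mono_tags) replicate_length_same set_takeWhileD)
  then have "z = replicate (Suc (length (takeWhile (\<lambda>x. x = c) z0))) c @ z'"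
    unfolding z z'_def by (metis append_Cons replicate_Suc takeWhile_dropWhile_id)
  ultimately show thesis
    using that by blast
qed

lemma distinct_adj_alternating:
  assumes "distinct_adj r" and "set r \<subseteq> {a, b}" and "r \<noteq> []" and "hd r = a" and "last r = b"
    and "a \<noteq> b"
  shows "\<exists>n. r = concat (replicate n [a, b])"
  using assms
proof (induction r rule: induct_list012)
  case (3 x y zs)
  then have xy: "x = a" "y = b"
    by auto
  show ?case
  proof (cases zs)
    case Nil
    then show ?thesis
      using xy by (intro exI[of _ 1]) simp
  next
    case (Cons z zs')
    then have "z = a"
      using 3(3,4) xy by auto
    then obtain n where "zs = concat (replicate n [a, b])"
      using 3 Cons by (auto simp: distinct_adj_Cons)
    then show ?thesis
      using xy by (intro exI[of _ "Suc n"]) simp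
  qed
qed auto

lemma sorted_two_letters_eq_replicate:
  fixes a b :: "'a::linorder"
  assumes "sorted u" and "set u \<subseteq> {a, b}" and "a < b"
  shows "\<exists>i j. u = replicate i a @ replicate j b"
  using assms
proof (induction u)
  case Nil
  then show ?case
    by (metis append_Nil replicate_0)
next
  case (Cons y u)
  show ?case
  proof (cases "y = a")
    case True
    then obtain i j where "u = replicate i a @ replicate j b"
      using Cons by auto
    then show ?thesis
      using True by (metis append_Cons replicate_Suc)
  next
    case False
    then have "\<forall>z\<in>set (y # u). z = b"
      using Cons.prems by fastforce
    then have "y # u = replicate 0 a @ replicate (length (y # u)) b"
      by (simp add: replicate_length_same)
    then show ?thesis
      by blast
  qed
qed

lemma remdups_adj_unsorted_between:
  fixes a b :: "'a::linorder"
  assumes "set u \<subseteq> {a, b}" and "\<not> sorted u" and "a < b"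
  obtains j where "remdups_adj (a # u @ [b]) = concat (replicate (j + 2) [a, b])"
proof -
  obtain n where n: "remdups_adj (a # u @ [b]) = concat (replicate n [a, b])"
    using distinct_adj_alternating[of "remdups_adj (a # u @ [b])" a b] assms by auto
  have "n \<noteq> 0"
    using n by (metis concat.simps(1) list.distinct(1) remdups_adj_Nil_iff replicate_0)
  moreover have "n \<noteq> 1"
  proof
    assume "n = 1"
    then have "remdups_adj (a # u @ [b]) = [a, b]"
      using n by simp
    then obtain i j z where "a # u @ [b] = replicate i a @ replicate j b @ z" "remdups_adj z = []"
      by (auto elim!: remdups_adj_eq_ConsE)
    then have "sorted (a # u @ [b])"
      using \<open>a < b\<close> by (simp add: sorted_append less_imp_le)
    then show False
      using \<open>\<not> sorted u\<close> by (simp add: sorted_append)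
  qed
  ultimately obtain j where "n = j + 2"
    by (metis add_2_eq_Suc' not0_implies_Suc One_nat_def)
  then show thesis
    using that n by blast
qed

section \<open>The congruence \<open>lam\<close>\<close>

lemma first_two_adj_Nil [simp]: "\<not> first_two_adj x []"
  unfolding first_two_adj_def by auto

lemma first_two_adj_Cons [simp]:
  "first_two_adj x (y # z) \<longleftrightarrow> (if y = x then z \<noteq> [] \<and> hd z = x else first_two_adj x z)"
proof -
  have "first_two_adj x (x # z) \<longleftrightarrow> z \<noteq> [] \<and> hd z = x"
    unfolding first_two_adj_def
    by (cases z) (auto simp: Cons_eq_append_conv intro: exI[of _ "[]"])
  moreover have "first_two_adj x (y # z) \<longleftrightarrow> first_two_adj x z" if "y \<noteq> x"
    unfolding first_two_adj_def using that
    by (auto simp: Cons_eq_append_conv) (metis set_ConsD)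
  ultimately show ?thesis by auto
qed

lemma first_two_adj_append:
  "first_two_adj x (u @ v) \<longleftrightarrow> first_two_adj x u \<or> (x \<notin> set u \<and> first_two_adj x v)
     \<or> (count_list u x = 1 \<and> last u = x \<and> v \<noteq> [] \<and> hd v = x)"
proof (induction u)
  case (Cons y u)
  then show ?case
    by (cases "y = x"; cases u) (auto simp: count_list_0_iff)
qed simp

lemma first_two_adj_imp_count: "first_two_adj x w \<Longrightarrow> 2 \<le> count_list w x"
  by (induction w) (auto split: if_splits simp: neq_Nil_conv)

lemma tau1_remdups_adj: "tau1 u (remdups_adj u)"
proof (induction u rule: remdups_adj.induct)
  case (3 x y xs)
  show ?case
  proof (cases "x = y")
    case True
    have "tau1 (x # x # xs) (x # xs)"
      using tau1_ctx[OF tau1_sym[OF tau1_base], of "[]" x xs] by simp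
    with 3 True show ?thesis by (auto intro: tau1_trans)
  next
    case False
    with 3 show ?thesis using tau1_ctx[of "y # xs" _ "[x]" "[]"] by simp
  qed
qed (auto intro: tau1_refl)

lemma tau1_iff_remdups_adj: "tau1 u v \<longleftrightarrow> remdups_adj u = remdups_adj v"
proof
  show "tau1 u v \<Longrightarrow> remdups_adj u = remdups_adj v"
  proof (induction rule: tau1.induct)
    case (tau1_ctx u v p s)
    then show ?case
      by (metis remdups_adj_append_remdups_adj_left remdups_adj_append_remdups_adj_right)
  qed auto
  show "remdups_adj u = remdups_adj v \<Longrightarrow> tau1 u v"
    by (metis tau1_remdups_adj tau1_sym tau1_trans)
qed

lemma lam_iff:
  "lam u v \<longleftrightarrow> remdups_adj u = remdups_adj v
     \<and> (\<forall>x. 2 \<le> count_list u x \<longleftrightarrow> 2 \<le> count_list v x)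
     \<and> (\<forall>x. first_two_adj x u \<longleftrightarrow> first_two_adj x v)"
  unfolding lam_def mult_letters_def tau1_iff_remdups_adj
  by (auto dest: first_two_adj_imp_count)

lemma lam_refl [simp]: "lam u u"
  by (simp add: lam_iff)

lemma lam_sym: "lam u v \<Longrightarrow> lam v u"
  by (simp add: lam_iff)

lemma lam_trans: "lam u v \<Longrightarrow> lam v w \<Longrightarrow> lam u w"
  by (simp add: lam_iff)

lemma lam_remdups_adj_eq: "lam u v \<Longrightarrow> remdups_adj u = remdups_adj v"
  by (simp add: lam_iff)

lemma lam_set_eq: "lam u v \<Longrightarrow> set u = set v"
  by (metis lam_remdups_adj_eq remdups_adj_set)

lemma lam_hd_eq: "lam u v \<Longrightarrow> hd u = hd v"
  by (metis lam_remdups_adj_eq hd_remdups_adj)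

lemma lam_count_ge2_iff: "lam u v \<Longrightarrow> 2 \<le> count_list u x \<longleftrightarrow> 2 \<le> count_list v x"
  by (simp add: lam_iff)

lemma lam_count_eq_0_iff: "lam u v \<Longrightarrow> count_list u x = 0 \<longleftrightarrow> count_list v x = 0"
  by (simp add: count_list_0_iff lam_set_eq)

lemma lam_first_two_adj_iff: "lam u v \<Longrightarrow> first_two_adj x u \<longleftrightarrow> first_two_adj x v"
  by (simp add: lam_iff)

lemma lam_append: "lam u v \<Longrightarrow> lam (p @ u @ s) (p @ v @ s)"
proof -
  assume l: "lam u v"
  then have rd: "remdups_adj u = remdups_adj v"
    and c2: "\<And>x. 2 \<le> count_list u x \<longleftrightarrow> 2 \<le> count_list v x"
    and f: "\<And>x. first_two_adj x u \<longleftrightarrow> first_two_adj x v"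
    by (simp_all add: lam_iff)
  have st: "set u = set v" and hd: "hd u = hd v" and c0: "\<And>x. count_list u x = 0 \<longleftrightarrow> count_list v x = 0"
    using lam_set_eq[OF l] lam_hd_eq[OF l] lam_count_eq_0_iff[OF l] by blast+
  have la: "last u = last v" and nl: "u = [] \<longleftrightarrow> v = []"
    by (metis rd last_remdups_adj, metis rd remdups_adj_Nil_iff)
  have c1: "count_list u x = 1 \<longleftrightarrow> count_list v x = 1" for x
    using c0[of x] c2[of x] by linarith
  have "remdups_adj (p @ u @ s) = remdups_adj (p @ v @ s)"
    by (metis rd remdups_adj_append_remdups_adj_left remdups_adj_append_remdups_adj_right)
  moreover have "2 \<le> count_list (p @ u @ s) x \<longleftrightarrow> 2 \<le> count_list (p @ v @ s) x" for x
    using st c1[of x] c2[of x] by (auto simp: count_list_0_iff[symmetric])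
  moreover have "first_two_adj x (u @ s) \<longleftrightarrow> first_two_adj x (v @ s)" for x
    unfolding first_two_adj_append using st f c1 la by auto
  then have "first_two_adj x (p @ u @ s) \<longleftrightarrow> first_two_adj x (p @ v @ s)" for x
    unfolding first_two_adj_append[of x p] using hd nl by (cases "u = []") auto
  ultimately show ?thesis
    by (simp add: lam_iff)
qed

lemma lam_append_append: "lam u v \<Longrightarrow> lam u' v' \<Longrightarrow> lam (u @ u') (v @ v')"
  by (metis lam_append lam_trans append_Nil append_Nil2)

lemma mem_lam_class [simp]: "v \<in> lam_class u \<longleftrightarrow> lam u v"
  unfolding lam_class_def by simp

lemma lam_class_eq_iff: "lam_class u = lam_class v \<longleftrightarrow> lam u v"
  unfolding lam_class_def using lam_sym lam_trans lam_refl by blast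

lemma first_two_adj_replicate: "first_two_adj x (replicate n c) \<longleftrightarrow> x = c \<and> 2 \<le> n"
  by (induction n) auto

lemma lam_replicate:
  assumes "n = 0 \<longleftrightarrow> n' = 0" and "2 \<le> n \<longleftrightarrow> 2 \<le> n'"
  shows "lam (replicate n c) (replicate n' c)"
  using assms by (simp add: lam_iff remdups_adj_replicate count_list_replicate first_two_adj_replicate)

lemma lam_snoc_square:
  assumes "c \<in> set q"
  shows "lam (q @ [c, c]) (q @ [c])"
proof -
  have "count_list q c \<noteq> 0"
    using assms by (simp add: count_list_0_iff)
  then show ?thesis
    unfolding lam_iff remdups_adj_append_two
    by (auto simp: first_two_adj_append count_list_0_iff[symmetric])
qed

lemma lam_snoc_replicate: "c \<in> set q \<Longrightarrow> lam (q @ replicate (Suc n) c) (q @ [c])"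
proof (induction n)
  case (Suc n)
  have "lam ((q @ replicate n c) @ [c, c]) ((q @ replicate n c) @ [c])"
    using Suc.prems by (intro lam_snoc_square) simp
  moreover have "replicate n c @ [c, c] = replicate (Suc (Suc n)) c"
    by (induction n) auto
  ultimately show ?case
    using Suc by (metis append_assoc lam_trans replicate_append_same replicate_Suc)
qed simp

lemma lam_append_replicate_after:
  assumes "c \<in> set q" and "n = 0 \<longleftrightarrow> n' = 0"
  shows "lam (q @ replicate n c) (q @ replicate n' c)"
proof (cases "n = 0")
  case False
  then obtain a b where "n = Suc a" "n' = Suc b"
    using assms(2) not0_implies_Suc by blast
  then show ?thesis
    using lam_snoc_replicate[OF assms(1)] lam_sym lam_trans by metis
qed (use assms in simp)

lemma not_first_two_adj_replicate_append:
  "\<not> first_two_adj c (replicate i c @ z) \<Longrightarrow> i < 2"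
  by (auto simp: first_two_adj_append first_two_adj_replicate)

lemma ata_plus_eq_lam_class: "ata_plus = lam_class [0, 1, 0]"
proof (intro Set.set_eqI iffI)
  fix z assume "z \<in> ata_plus"
  then obtain k where "z = [0, 1] @ replicate (Suc k) 0"
    unfolding ata_plus_def by auto
  then show "z \<in> lam_class [0, 1, 0]"
    using lam_snoc_replicate[of 0 "[0, 1]" k] by (simp add: lam_sym)
next
  fix z assume "z \<in> lam_class [0, 1, 0]"
  then have lz: "lam [0, 1, 0] z" by simp
  have "remdups_adj z = [0, 1, 0]"
    using lam_remdups_adj_eq[OF lz] by simp
  then obtain i z1 where i: "0 < i" "z = replicate i 0 @ z1" "remdups_adj z1 = [1, 0]"
    by (rule remdups_adj_eq_ConsE)
  then obtain j z2 where j: "0 < j" "z1 = replicate j 1 @ z2" "remdups_adj z2 = [0]"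
    by (auto elim: remdups_adj_eq_ConsE)
  then obtain n z3 where n: "0 < n" "z2 = replicate n 0 @ z3" "remdups_adj z3 = []"
    by (auto elim: remdups_adj_eq_ConsE)
  note z = i(2) j(2) n(2) and ijn = i(1) j(1) n(1)
  have "z3 = []"
    using n by simp
  have "j = 1"
    using lam_count_ge2_iff[OF lz, of 1] z ijn by (simp add: count_list_replicate)
  moreover have "i = 1"
    using lam_first_two_adj_iff[OF lz, of 0] z ijn not_first_two_adj_replicate_append[of 0 i z1]
    by simp
  moreover obtain n' where "n = Suc n'"
    using ijn by (cases n) auto
  ultimately have "z = [0, 1, 0] @ replicate n' 0"
    using z \<open>z3 = []\<close> by simp
  then show "z \<in> ata_plus"
    unfolding ata_plus_def by blast
qed

lemma btab_plus_eq_lam_class: "btab_plus = lam_class [2, 1, 0, 0, 2]"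
proof (intro Set.set_eqI iffI)
  fix z assume "z \<in> btab_plus"
  then obtain k m where z: "z = [2, 1] @ replicate k 0 @ replicate m 2" "2 \<le> k" "1 \<le> m"
    unfolding btab_plus_def by auto
  then obtain m' where "m = Suc m'"
    by (cases m) auto
  have "lam ([2, 1] @ replicate 2 0 @ [2]) ([2, 1] @ replicate k 0 @ [2])"
    using lam_append[OF lam_replicate[of 2 k 0], of "[2, 1]" "[2]"] z(2) by simp
  moreover have "lam ([2, 1] @ replicate k 0 @ replicate m 2) ([2, 1] @ replicate k 0 @ [2])"
    using lam_snoc_replicate[of 2 "[2, 1] @ replicate k 0" m'] \<open>m = Suc m'\<close> by simp
  ultimately show "z \<in> lam_class [2, 1, 0, 0, 2]"
    using z by (simp add: numeral_2_eq_2) (metis lam_sym lam_trans)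
next
  fix z assume "z \<in> lam_class [2, 1, 0, 0, 2]"
  then have lz: "lam [2, 1, 0, 0, 2] z" by simp
  have "remdups_adj z = [2, 1, 0, 2]"
    using lam_remdups_adj_eq[OF lz] by simp
  then obtain i z1 where i: "0 < i" "z = replicate i 2 @ z1" "remdups_adj z1 = [1, 0, 2]"
    by (rule remdups_adj_eq_ConsE)
  then obtain j z2 where j: "0 < j" "z1 = replicate j 1 @ z2" "remdups_adj z2 = [0, 2]"
    by (auto elim: remdups_adj_eq_ConsE)
  then obtain k z3 where k: "0 < k" "z2 = replicate k 0 @ z3" "remdups_adj z3 = [2]"
    by (auto elim: remdups_adj_eq_ConsE)
  then obtain m z4 where m: "0 < m" "z3 = replicate m 2 @ z4" "remdups_adj z4 = []"
    by (auto elim: remdups_adj_eq_ConsE)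
  have "z4 = []"
    using m by simp
  note z = i(2) j(2) k(2) m(2) this and ijkm = i(1) j(1) k(1) m(1)
  have "j = 1"
    using lam_count_ge2_iff[OF lz, of 1] z ijkm by (simp add: count_list_replicate)
  moreover have "2 \<le> k"
    using lam_count_ge2_iff[OF lz, of 0] z by (simp add: count_list_replicate)
  moreover have "i = 1"
    using lam_first_two_adj_iff[OF lz, of 2] z ijkm not_first_two_adj_replicate_append[of 2 i z1]
    by simp
  ultimately show "z \<in> btab_plus"
    unfolding btab_plus_def using z ijkm by force
qed

section \<open>The monoids \<open>M_lam W\<close> and their identities\<close>

lemma subst_word_cong: "(\<And>z. z \<in> set w \<Longrightarrow> \<rho> z = \<rho>' z) \<Longrightarrow> subst_word \<rho> w = subst_word \<rho>' w"
  unfolding subst_word_def by (metis map_cong)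

lemma subst_word_replicate [simp]: "subst_word \<rho> (replicate n a) = concat (replicate n (\<rho> a))"
  by (induction n) (simp_all add: subst_word_def)

lemma subst_word_simps [simp]:
  "subst_word \<rho> [] = []"
  "subst_word \<rho> (a # w) = \<rho> a @ subst_word \<rho> w"
  "subst_word \<rho> (u @ w) = subst_word \<rho> u @ subst_word \<rho> w"
  by (simp_all add: subst_word_def)

lemma eval_word_simps [simp]:
  "eval_word M \<phi> [] = \<one>\<^bsub>M\<^esub>"
  "eval_word M \<phi> (a # w) = \<phi> a \<otimes>\<^bsub>M\<^esub> eval_word M \<phi> w"
  by (simp_all add: eval_word_def)

definition is_factor_in :: "word \<Rightarrow> word set \<Rightarrow> bool" where
  "is_factor_in z C \<longleftrightarrow> (\<exists>p s. p @ z @ s \<in> C)"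

lemma is_factor_in_infix: "is_factor_in (p @ z @ s) C \<Longrightarrow> is_factor_in z C"
  unfolding is_factor_in_def by (metis append_assoc)

lemma is_factor_in_lam_class_Nil: "is_factor_in [] (lam_class c)"
  unfolding is_factor_in_def by (metis append_Nil lam_refl mem_lam_class)

lemma is_factor_in_subst_word:
  assumes "is_factor_in (subst_word \<rho> x) C" and "a \<in> set x"
  shows "is_factor_in (\<rho> a) C"
proof -
  obtain x1 x2 where "x = x1 @ a # x2"
    using assms(2) by (meson split_list)
  then show ?thesis
    using assms(1) is_factor_in_infix[of "subst_word \<rho> x1" "\<rho> a" "subst_word \<rho> x2"] by simp
qed

lemma is_factor_in_lam_class_set:
  assumes "is_factor_in z (lam_class c)"
  shows "set z \<subseteq> set c"
proof -
  obtain p s where "lam c (p @ z @ s)"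
    using assms unfolding is_factor_in_def by auto
  then show ?thesis
    using lam_set_eq by fastforce
qed

lemma below_W_singleton_iff:
  "below_W {lam_class c} (lam_class z) \<longleftrightarrow> is_factor_in z (lam_class c)"
proof
  assume "below_W {lam_class c} (lam_class z)"
  then obtain p s v where "lam z v" "lam_class c = lam_class (p @ v @ s)"
    unfolding below_W_def lam_le_def by auto
  then have "lam c (p @ z @ s)"
    by (meson lam_append lam_class_eq_iff lam_sym lam_trans)
  then show "is_factor_in z (lam_class c)"
    unfolding is_factor_in_def by auto
next
  assume "is_factor_in z (lam_class c)"
  then obtain p s where "lam c (p @ z @ s)"
    unfolding is_factor_in_def by auto
  then have "lam_class c = lam_class (p @ z @ s)"
    by (simp add: lam_class_eq_iff)
  then show "below_W {lam_class c} (lam_class z)"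
    unfolding below_W_def lam_le_def
    by (intro bexI[OF _ singletonI] exI[of _ p] exI[of _ s] exI[of _ z]) simp
qed

lemma below_W_infix: "below_W W (lam_class (p @ z @ s)) \<Longrightarrow> below_W W (lam_class z)"
proof -
  assume "below_W W (lam_class (p @ z @ s))"
  then obtain U p' s' v where U: "U \<in> W" "lam (p @ z @ s) v" "U = lam_class (p' @ v @ s')"
    unfolding below_W_def lam_le_def by auto
  then have "U = lam_class ((p' @ p) @ z @ (s @ s'))"
    using lam_append[OF lam_sym[OF U(2)], of p' s'] by (simp add: lam_class_eq_iff)
  then show ?thesis
    unfolding below_W_def lam_le_def using U(1) lam_refl mem_lam_class by blast
qed

lemma lam_mult_lam_class: "lam_mult (lam_class u) (lam_class v) = lam_class (u @ v)"
proof -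
  have "lam u (SOME u'. u' \<in> lam_class u)" "lam v (SOME v'. v' \<in> lam_class v)"
    using someI[of "\<lambda>u'. u' \<in> lam_class _", OF lam_refl[THEN mem_lam_class[THEN iffD2]]] by simp_all
  then show ?thesis
    unfolding lam_mult_def by (simp add: lam_class_eq_iff lam_append_append lam_sym)
qed

lemma eval_word_M_lam:
  assumes "below_W W (lam_class [])"
    and "\<And>z. \<phi> z = None \<or> \<phi> z = Some (lam_class (\<rho> z))"
  shows "eval_word (M_lam W) \<phi> w =
    (if (\<forall>z\<in>set w. \<phi> z \<noteq> None) \<and> below_W W (lam_class (subst_word \<rho> w))
     then Some (lam_class (subst_word \<rho> w)) else None)"
proof (induction w)
  case Nil
  then show ?case
    using assms(1) by (simp add: M_lam_def)
next
  case (Cons a w)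
  show ?case
  proof (cases "\<phi> a = None")
    case False
    then have "\<phi> a = Some (lam_class (\<rho> a))"
      using assms(2) by metis
    then show ?thesis
      using Cons below_W_infix[of W "\<rho> a" "subst_word \<rho> w" "[]"]
      by (auto simp: M_lam_def lam_mult_lam_class)
  qed (simp add: M_lam_def)
qed

lemma eval_word_M_lam_class:
  assumes "\<And>z. \<phi> z = None \<or> \<phi> z = Some (lam_class (\<rho> z))"
  shows "eval_word (M_lam {lam_class c}) \<phi> w =
    (if (\<forall>z\<in>set w. \<phi> z \<noteq> None) \<and> is_factor_in (subst_word \<rho> w) (lam_class c)
     then Some (lam_class (subst_word \<rho> w)) else None)"
  using eval_word_M_lam[of "{lam_class c}" \<phi> \<rho> w] assms
  by (simp add: below_W_singleton_iff is_factor_in_lam_class_Nil)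

lemma equational_theory_refl: "equational_theory E \<Longrightarrow> (u, u) \<in> E"
  unfolding equational_theory_def by blast

lemma equational_theory_sym: "equational_theory E \<Longrightarrow> (u, v) \<in> E \<Longrightarrow> (v, u) \<in> E"
  unfolding equational_theory_def by blast

lemma equational_theory_trans:
  "equational_theory E \<Longrightarrow> (u, v) \<in> E \<Longrightarrow> (v, w) \<in> E \<Longrightarrow> (u, w) \<in> E"
  unfolding equational_theory_def by blast

lemma equational_theory_append:
  "equational_theory E \<Longrightarrow> (u, v) \<in> E \<Longrightarrow> (p @ u @ s, p @ v @ s) \<in> E"
  unfolding equational_theory_def by blast

lemma equational_theory_subst:
  "equational_theory E \<Longrightarrow> (u, v) \<in> E \<Longrightarrow> (subst_word \<sigma> u, subst_word \<sigma> v) \<in> E"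
  unfolding equational_theory_def by blast

lemma M_lam_identity_imp_lam:
  assumes "variety_contains E (M_lam {lam_class c})" and "(x, y) \<in> E"
    and "is_factor_in (subst_word \<rho> x) (lam_class c)"
  shows "set y \<subseteq> set x" and "lam (subst_word \<rho> x) (subst_word \<rho> y)"
proof -
  let ?M = "M_lam {lam_class c}"
  define \<phi> where "\<phi> z = (if z \<in> set x then Some (lam_class (\<rho> z)) else None)" for z
  have ev: "eval_word ?M \<phi> w =
      (if (\<forall>z\<in>set w. \<phi> z \<noteq> None) \<and> is_factor_in (subst_word \<rho> w) (lam_class c)
       then Some (lam_class (subst_word \<rho> w)) else None)" for w
    by (rule eval_word_M_lam_class) (simp add: \<phi>_def)
  have "\<forall>a. \<phi> a \<in> carrier ?M"
    using is_factor_in_subst_word[OF assms(3)]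
    by (auto simp: M_lam_def \<phi>_def below_W_singleton_iff)
  then have "eval_word ?M \<phi> x = eval_word ?M \<phi> y"
    using assms(1,2) unfolding variety_contains_def sat_id_def by fastforce
  then have "eval_word ?M \<phi> y = Some (lam_class (subst_word \<rho> x))"
    using ev[of x] assms(3) by (simp add: \<phi>_def)
  then have "\<forall>z\<in>set y. \<phi> z \<noteq> None" and "lam_class (subst_word \<rho> y) = lam_class (subst_word \<rho> x)"
    using ev[of y] by (auto split: if_splits)
  then show "set y \<subseteq> set x" and "lam (subst_word \<rho> x) (subst_word \<rho> y)"
    by (auto simp: \<phi>_def lam_class_eq_iff lam_sym split: if_splits)
qed

lemma not_variety_containsE:
  assumes "equational_theory E" and "\<not> variety_contains E M"
  obtains u v \<phi> where "(u, v) \<in> E" and "\<forall>a. \<phi> a \<in> carrier M"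
    and "eval_word M \<phi> u \<noteq> eval_word M \<phi> v" and "eval_word M \<phi> u \<noteq> z"
proof -
  obtain u v \<phi> where "(u, v) \<in> E" and "\<forall>a. \<phi> a \<in> carrier M"
    and "eval_word M \<phi> u \<noteq> eval_word M \<phi> v"
    using assms(2) unfolding variety_contains_def sat_id_def by auto
  moreover have "(v, u) \<in> E"
    using equational_theory_sym[OF assms(1) \<open>(u, v) \<in> E\<close>] .
  ultimately show thesis
    using that by (metis (full_types))
qed

lemma M_lam_assignment_classes:
  assumes "\<forall>a. \<phi> a \<in> carrier (M_lam W)"
  obtains \<rho> where "\<And>z. \<phi> z = None \<or> \<phi> z = Some (lam_class (\<rho> z))"
proof
  fix z
  show "\<phi> z = None \<or> \<phi> z = Some (lam_class (SOME r. \<phi> z = Some (lam_class r)))"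
    using assms unfolding M_lam_def by (auto intro: someI)
qed

lemma not_variety_contains_M_lam:
  assumes "equational_theory E" and "\<not> variety_contains E (M_lam {lam_class c})"
  obtains x y where "(x, y) \<in> E" and "is_factor_in x (lam_class c)"
    and "\<not> (is_factor_in y (lam_class c) \<and> lam x y)"
proof -
  let ?M = "M_lam {lam_class c}"
  obtain u v \<phi> where uv: "(u, v) \<in> E" and car: "\<forall>a. \<phi> a \<in> carrier ?M"
    and ne: "eval_word ?M \<phi> u \<noteq> eval_word ?M \<phi> v" and nz: "eval_word ?M \<phi> u \<noteq> None"
    using not_variety_containsE[OF assms] .
  obtain \<rho> where "\<phi> z = None \<or> \<phi> z = Some (lam_class (\<rho> z))" for z
    using M_lam_assignment_classes[OF car] by blast
  then have ev: "eval_word ?M \<phi> w =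
      (if (\<forall>z\<in>set w. \<phi> z \<noteq> None) \<and> is_factor_in (subst_word \<rho> w) (lam_class c)
       then Some (lam_class (subst_word \<rho> w)) else None)" for w
    by (rule eval_word_M_lam_class)
  obtain a where a: "a \<notin> set c"
    using ex_new_if_finite[OF infinite_UNIV_nat] by blast
  \<comment> \<open>Letters evaluated to zero are sent to a letter outside \<open>c\<close>, so that \<open>\<sigma>\<close> maps \<open>v\<close>
    onto a factor of \<open>c\<close> only if \<open>v\<close> avoids them.\<close>
  define \<sigma> where "\<sigma> z = (if \<phi> z = None then [a] else \<rho> z)" for z
  have u: "\<forall>z\<in>set u. \<phi> z \<noteq> None" and x: "is_factor_in (subst_word \<rho> u) (lam_class c)"
    using nz ev[of u] by (auto split: if_splits)
  have "subst_word \<rho> u = subst_word \<sigma> u"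
    using u by (intro subst_word_cong) (auto simp: \<sigma>_def)
  then have xy: "(subst_word \<rho> u, subst_word \<sigma> v) \<in> E"
    using equational_theory_subst[OF assms(1) uv] by simp
  moreover have "\<not> (is_factor_in (subst_word \<sigma> v) (lam_class c)
      \<and> lam (subst_word \<rho> u) (subst_word \<sigma> v))"
  proof
    assume y: "is_factor_in (subst_word \<sigma> v) (lam_class c)
      \<and> lam (subst_word \<rho> u) (subst_word \<sigma> v)"
    have v: "\<forall>z\<in>set v. \<phi> z \<noteq> None"
    proof
      fix z assume "z \<in> set v"
      then have "set (\<sigma> z) \<subseteq> set c"
        using y is_factor_in_subst_word is_factor_in_lam_class_set by blast
      then show "\<phi> z \<noteq> None"
        using a by (auto simp: \<sigma>_def split: if_splits)
    qed
    then have "subst_word \<sigma> v = subst_word \<rho> v"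
      by (intro subst_word_cong) (auto simp: \<sigma>_def)
    then show False
      using ne ev[of u] ev[of v] u v x y by (simp add: lam_class_eq_iff)
  qed
  ultimately show thesis
    using that x by blast
qed

section \<open>Consequences of \<open>xtx \<approx> xtx\<^sup>2\<close>\<close>

locale xtx_theory =
  fixes E :: "(word \<times> word) set"
  assumes equational_theory: "equational_theory E"
    and xtx: "([0, 1, 0], [0, 1, 0, 0]) \<in> E"
begin

lemmas E_refl = equational_theory_refl[OF equational_theory]
  and E_sym = equational_theory_sym[OF equational_theory]
  and E_trans = equational_theory_trans[OF equational_theory]
  and E_append = equational_theory_append[OF equational_theory]
  and E_subst = equational_theory_subst[OF equational_theory]

lemma E_append_right: "(u, v) \<in> E \<Longrightarrow> (u @ s, v @ s) \<in> E"
  using E_append[of u v "[]" s] by simp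

lemma square_repeated_factor: "(p @ w @ t @ w @ s, p @ w @ t @ w @ w @ s) \<in> E"
proof -
  define \<sigma> where "\<sigma> z = (if z = 0 then w else t)" for z :: nat
  have "(subst_word \<sigma> [0, 1, 0], subst_word \<sigma> [0, 1, 0, 0]) \<in> E"
    using E_subst[OF xtx] .
  then show ?thesis
    using E_append[of "w @ t @ w" "w @ t @ w @ w" p s] by (simp add: \<sigma>_def)
qed

lemma square_power: "(concat (replicate (n + 2) w), concat (replicate 2 w)) \<in> E"
proof (induction n)
  case (Suc n)
  have r: "replicate (Suc n + 2) w = [w] @ replicate n w @ [w, w]"
    "replicate (n + 2) w = [w] @ replicate n w @ [w]"
    by (induction n) (auto simp: numeral_2_eq_2)
  have "(concat (replicate (Suc n + 2) w), concat (replicate (n + 2) w)) \<in> E"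
    unfolding r using E_sym[OF square_repeated_factor[of "[]" w "concat (replicate n w)" "[]"]]
    by simp
  then show ?case
    using Suc E_trans by blast
qed (simp add: E_refl numeral_2_eq_2)

lemma remdups_adj_after_prefix:
  "set v \<subseteq> set p \<Longrightarrow> (p @ v, p @ remdups_adj v) \<in> E"
proof (induction v arbitrary: p rule: remdups_adj.induct)
  case (3 x y xs)
  show ?case
  proof (cases "x = y")
    case True
    obtain p1 p2 where "p = p1 @ x # p2"
      using "3.prems" by (auto dest!: split_list)
    then have "(p @ x # xs, p @ x # x # xs) \<in> E"
      using square_repeated_factor[of p1 "[x]" p2 xs] by simp
    with 3 True show ?thesis
      by (auto intro: E_trans E_sym)
  next
    case False
    have "((p @ [x]) @ y # xs, (p @ [x]) @ remdups_adj (y # xs)) \<in> E"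
      using "3.IH"(2)[OF False, of "p @ [x]"] "3.prems" by auto
    with False show ?thesis
      by simp
  qed
qed (simp_all add: E_refl)

lemma btab_identity_imp_target:
  assumes uE: "([2, 1] @ replicate k 0 @ replicate m 2, 2 # 1 # u) \<in> E" and "0 < m"
    and u: "set u \<subseteq> {0, 2}" and "\<not> sorted u"
  shows "([2, 1, 0, 0, 2], [2, 1, 0, 0, 2, 0, 2]) \<in> E"
proof -
  define \<sigma> where "\<sigma> z = (if z = 1 then [1, 0, 0] else [z])" for z :: nat
  have \<sigma>_id: "1 \<notin> set w \<Longrightarrow> subst_word \<sigma> w = w" for w
    by (induction w) (auto simp: \<sigma>_def)
  have "subst_word \<sigma> u = u"
    using u by (intro \<sigma>_id) auto
  moreover have "subst_word \<sigma> (replicate k 0 @ replicate m 2) = replicate k 0 @ replicate m 2"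
    by (intro \<sigma>_id) auto
  ultimately have "([2, 1, 0] @ replicate (Suc k) 0 @ replicate m 2, [2, 1, 0] @ 0 # u) \<in> E"
    using E_subst[OF uE, of \<sigma>] by (simp add: \<sigma>_def)
  moreover have "remdups_adj (0 # replicate k 0 @ replicate m 2) = [0, 2 :: nat]"
    using \<open>0 < m\<close> by (induction k) (auto simp: remdups_adj_Cons remdups_adj_replicate)
  then have "([2, 1, 0] @ replicate (Suc k) 0 @ replicate m 2, [2, 1, 0, 0, 2]) \<in> E"
    using remdups_adj_after_prefix[of "replicate (Suc k) 0 @ replicate m 2" "[2, 1, 0]"]
    by (auto simp: set_replicate_conv_if)
  ultimately have "([2, 1, 0, 0, 2], [2, 1, 0] @ 0 # u) \<in> E"
    using E_sym E_trans by blast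
  then have "([2, 1, 0, 0, 2] @ [2], [2, 1, 0] @ 0 # u @ [2]) \<in> E"
    using E_append_right by fastforce
  moreover have "([2, 1, 0, 0, 2], [2, 1, 0, 0, 2] @ [2]) \<in> E"
    using E_sym[OF remdups_adj_after_prefix[of "[2, 2]" "[2, 1, 0, 0]"]] by simp
  ultimately have lhs: "([2, 1, 0, 0, 2], [2, 1, 0] @ 0 # u @ [2]) \<in> E"
    using E_trans by blast
  obtain j where "remdups_adj (0 # u @ [2]) = concat (replicate (j + 2) [0, 2])"
    using remdups_adj_unsorted_between[OF u \<open>\<not> sorted u\<close>] by auto
  then have "([2, 1, 0] @ 0 # u @ [2], [2, 1, 0] @ concat (replicate 2 [0, 2])) \<in> E"
    using remdups_adj_after_prefix[of "0 # u @ [2]" "[2, 1, 0]"] u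
      E_append[OF square_power[of j "[0, 2]"], of "[2, 1, 0]" "[]"]
    by (auto intro: E_trans)
  then show ?thesis
    using lhs E_trans by (simp add: numeral_2_eq_2)
qed

end

section \<open>Factors of words in \<open>btab_plus\<close>\<close>

definition btab_factor_shape :: "word \<Rightarrow> bool" where
  "btab_factor_shape x \<longleftrightarrow> (\<exists>e1 e2 e3 e4. e1 \<le> e2 \<and> e2 \<le> 1
     \<and> x = replicate e1 2 @ replicate e2 1 @ replicate e3 0 @ replicate e4 2)"

lemma infix_of_sorted_two_letters:
  assumes "p @ x @ s = replicate k 0 @ replicate m (2::nat)"
  obtains i j where "x = replicate i 0 @ replicate j 2"
proof -
  have "sorted (p @ x @ s)" and "set (p @ x @ s) \<subseteq> {0, 2}"
    using assms by (auto simp: sorted_append set_replicate_conv_if)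
  then have "sorted x" and "set x \<subseteq> {0, 2}"
    by (auto simp: sorted_append)
  then show thesis
    using sorted_two_letters_eq_replicate[of x 0 2] that by auto
qed

lemma btab_factor_shape_if_is_factor:
  assumes "is_factor_in x btab_plus"
  shows "btab_factor_shape x"
proof -
  obtain p s k m where pxs: "p @ x @ s = 2 # 1 # replicate k 0 @ replicate m 2"
    using assms unfolding is_factor_in_def btab_plus_def by auto
  have shape: "btab_factor_shape (replicate e1 2 @ replicate e2 1 @ replicate i 0 @ replicate j 2)"
    if "e1 \<le> e2" "e2 \<le> 1" for e1 e2 i j
    unfolding btab_factor_shape_def using that by blast
  have prefix: "\<exists>i j. x' = replicate i 0 @ replicate j 2"
    if "x' @ s = replicate k 0 @ replicate m 2" for x'
    using that by (metis append_Nil infix_of_sorted_two_letters)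
  consider (drop2) p' where "p' @ x @ s = replicate k 0 @ replicate m 2"
    | (drop1) "x @ s = 1 # replicate k 0 @ replicate m 2"
    | (drop0) "x @ s = 2 # 1 # replicate k 0 @ replicate m 2"
    using pxs by (cases p rule: remdups_adj.cases) auto
  then show ?thesis
  proof cases
    case drop2
    then show ?thesis
      using shape[of 0 0] by (auto elim: infix_of_sorted_two_letters)
  next
    case drop1
    then consider "x = []" | x' where "x = 1 # x'" "x' @ s = replicate k 0 @ replicate m 2"
      by (cases x) auto
    then show ?thesis
      using shape[of 0 0 0 0] shape[of 0 1] prefix by cases fastforce+
  next
    case drop0
    then consider "x = []" | "x = [2]" | x' where "x = 2 # 1 # x'"
        "x' @ s = replicate k 0 @ replicate m 2"
      by (cases x rule: remdups_adj.cases) auto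
    then show ?thesis
      using shape[of 0 0 0 0] shape[of 0 0 0 1] shape[of 1 1] prefix by cases fastforce+
  qed
qed

definition erase_b :: "nat \<Rightarrow> word" where
  "erase_b z = (if z = 2 then [] else [z])"

definition erase_a_rename_b :: "nat \<Rightarrow> word" where
  "erase_a_rename_b z = (if z = 0 then [] else if z = 2 then [0] else [z])"

lemma count_list_erase_b: "c \<noteq> 2 \<Longrightarrow> count_list (subst_word erase_b u) c = count_list u c"
  by (induction u) (auto simp: erase_b_def)

lemma count_list_erase_a_rename_b: "count_list (subst_word erase_a_rename_b u) 0 = count_list u 2"
  by (induction u) (auto simp: erase_a_rename_b_def)

lemma is_factor_in_ata_plus:
  assumes "i \<le> 1" and "j \<le> 1"
  shows "is_factor_in (replicate i 0 @ replicate j 1 @ replicate n 0) ata_plus"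
proof -
  have mem: "[0, 1] @ replicate n 0 @ [0] \<in> ata_plus" for n
  proof -
    have "[0, 1] @ replicate n 0 @ [0] = [0, 1, 0] @ replicate n (0::nat)"
      by (simp add: replicate_append_same)
    then show ?thesis
      unfolding ata_plus_def by blast
  qed
  show ?thesis
  proof (cases "j = 0")
    case True
    then show ?thesis
      using mem[of "i + n"] unfolding is_factor_in_def
      by (intro exI[of _ "[0, 1]"] exI[of _ "[0]"]) (simp add: replicate_add)
  next
    case False
    then have "j = 1"
      using assms(2) by simp
    then have "replicate (1 - i) 0 @ (replicate i 0 @ replicate j 1 @ replicate n 0) @ [0]
        = [0, 1] @ replicate n 0 @ [0]"
      using assms(1) by (cases i) auto
    then show ?thesis
      using mem[of n] unfolding is_factor_in_def by metis
  qed
qed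

lemma erasures_lam_if_M_lam_ata_plus:
  assumes "variety_contains E (M_lam {ata_plus})" and "(x, y) \<in> E" and "btab_factor_shape x"
  shows "set y \<subseteq> set x"
    and "lam (subst_word erase_b x) (subst_word erase_b y)"
    and "lam (subst_word erase_a_rename_b x) (subst_word erase_a_rename_b y)"
proof -
  obtain e1 e2 e3 e4 where "e1 \<le> e2" "e2 \<le> 1"
    and x: "x = replicate e1 2 @ replicate e2 1 @ replicate e3 0 @ replicate e4 2"
    using assms(3) unfolding btab_factor_shape_def by blast
  then have "is_factor_in (subst_word erase_b x) (lam_class [0, 1, 0])"
    and "is_factor_in (subst_word erase_a_rename_b x) (lam_class [0, 1, 0])"
    using is_factor_in_ata_plus[of 0 e2 e3] is_factor_in_ata_plus[of e1 e2 e4]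
    by (auto simp: erase_b_def erase_a_rename_b_def ata_plus_eq_lam_class)
  then show "set y \<subseteq> set x"
    and "lam (subst_word erase_b x) (subst_word erase_b y)"
    and "lam (subst_word erase_a_rename_b x) (subst_word erase_a_rename_b y)"
    using M_lam_identity_imp_lam[OF assms(1)[unfolded ata_plus_eq_lam_class] assms(2)] by blast+
qed

lemma lam_btab_shape_exponents:
  assumes e3: "e3 = 0 \<longleftrightarrow> f3 = 0" "2 \<le> e3 \<longleftrightarrow> 2 \<le> f3"
    and e4: "e4 = 0 \<longleftrightarrow> f4 = 0" "e1 = 0 \<Longrightarrow> 2 \<le> e4 \<longleftrightarrow> 2 \<le> f4"
  shows "lam (replicate e1 2 @ replicate e2 1 @ replicate e3 0 @ replicate e4 2)
    (replicate e1 2 @ replicate e2 1 @ replicate f3 0 @ replicate f4 (2::nat))"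
proof -
  define q :: word where "q = replicate e1 2 @ replicate e2 1"
  have "lam (q @ replicate e3 0 @ replicate e4 2) (q @ replicate f3 0 @ replicate e4 2)"
    using lam_append[OF lam_replicate[OF e3]] by blast
  moreover have "lam (q @ replicate f3 0 @ replicate e4 2) (q @ replicate f3 0 @ replicate f4 2)"
  proof (cases "e1 = 0")
    case True
    then show ?thesis
      using lam_append[OF lam_replicate[OF e4(1) e4(2)[OF True], of 2], of "q @ replicate f3 0" "[]"]
      by simp
  next
    case False
    then have q2: "2 \<in> set (q @ replicate f3 0)"
      by (simp add: q_def)
    show ?thesis
      using lam_append_replicate_after[OF q2 e4(1)] by simp
  qed
  ultimately show ?thesis
    unfolding q_def by (auto intro: lam_trans)
qed

lemma lam_if_erasures_lam:
  assumes "btab_factor_shape x" and "btab_factor_shape y"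
    and "lam (subst_word erase_b x) (subst_word erase_b y)"
    and "lam (subst_word erase_a_rename_b x) (subst_word erase_a_rename_b y)"
  shows "lam x y"
proof -
  obtain e1 e2 e3 e4 where e: "e1 \<le> e2" "e2 \<le> 1"
    and x: "x = replicate e1 2 @ replicate e2 1 @ replicate e3 0 @ replicate e4 2"
    using assms(1) unfolding btab_factor_shape_def by blast
  obtain f1 f2 f3 f4 where f: "f1 \<le> f2" "f2 \<le> 1"
    and y: "y = replicate f1 2 @ replicate f2 1 @ replicate f3 0 @ replicate f4 2"
    using assms(2) unfolding btab_factor_shape_def by blast
  have l1: "lam (replicate e2 1 @ replicate e3 0) (replicate f2 1 @ replicate f3 0)"
    using assms(3) by (simp add: x y erase_b_def)
  have l2: "lam (replicate e1 0 @ replicate e2 1 @ replicate e4 0)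
      (replicate f1 0 @ replicate f2 1 @ replicate f4 0)"
    using assms(4) by (simp add: x y erase_a_rename_b_def)
  have "e2 = 0 \<longleftrightarrow> f2 = 0"
    using lam_count_eq_0_iff[OF l1, of 1] by (simp add: count_list_replicate)
  then have e2: "e2 = f2"
    using e f by linarith
  have e3: "e3 = 0 \<longleftrightarrow> f3 = 0" "2 \<le> e3 \<longleftrightarrow> 2 \<le> f3"
    using lam_count_eq_0_iff[OF l1, of 0] lam_count_ge2_iff[OF l1, of 0]
    by (simp_all add: count_list_replicate)
  have e1: "e1 = f1"
  proof (cases "e2 = 0")
    case False
    then have "e2 = 1" "f2 = 1"
      using e e2 by auto
    then have "e1 = 0 \<longleftrightarrow> f1 = 0"
      using lam_hd_eq[OF l2] by (cases e1; cases f1) auto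
    then show ?thesis
      using e f e2 by linarith
  qed (use e f e2 in simp)
  have "e1 + e4 = 0 \<longleftrightarrow> f1 + f4 = 0" "2 \<le> e1 + e4 \<longleftrightarrow> 2 \<le> f1 + f4"
    using lam_count_eq_0_iff[OF l2, of 0] lam_count_ge2_iff[OF l2, of 0]
    by (simp_all add: count_list_replicate)
  then have e4: "e4 = 0 \<longleftrightarrow> f4 = 0" "e1 = 0 \<Longrightarrow> 2 \<le> e4 \<longleftrightarrow> 2 \<le> f4"
    using e1 f by auto
  show ?thesis
    using lam_btab_shape_exponents[OF e3 e4] unfolding x y e1 e2 .
qed

lemma lam_if_btab_factors_identity:
  assumes "variety_contains E (M_lam {ata_plus})" and "(x, y) \<in> E"
    and "is_factor_in x btab_plus" and "is_factor_in y btab_plus"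
  shows "lam x y"
  using assms btab_factor_shape_if_is_factor
  by (blast intro: lam_if_erasures_lam dest: erasures_lam_if_M_lam_ata_plus)

lemma erasures_lam_btab_word_imp:
  assumes w: "set w \<subseteq> {0, 1, 2}" and "2 \<le> k" and "1 \<le> m"
    and lb: "lam (1 # replicate k 0) (subst_word erase_b w)"
    and la: "lam (0 # 1 # replicate m 0) (subst_word erase_a_rename_b w)"
  obtains u where "w = 2 # 1 # u" and "set u \<subseteq> {0, 2}"
    and "2 \<le> count_list u 0" and "1 \<le> count_list u 2"
proof -
  have hb: "hd (subst_word erase_b w) = 1" and ha: "hd (subst_word erase_a_rename_b w) = 0"
    using lam_hd_eq[OF lb] lam_hd_eq[OF la] by simp_all
  have "subst_word erase_b w \<noteq> []"
    using lam_set_eq[OF lb] by auto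
  then obtain c w' where cw: "w = c # w'" and "c \<in> {0, 1, 2}"
    using w by (cases w) auto
  then have c: "c = 2"
    using hb ha by (auto simp: erase_b_def erase_a_rename_b_def)
  have "subst_word erase_b w' \<noteq> []"
    using lam_set_eq[OF lb] cw c by (auto simp: erase_b_def)
  then obtain c' u where cu: "w' = c' # u" and "c' \<in> {0, 1, 2}"
    using w cw by (cases w') auto
  moreover have "\<not> first_two_adj 0 (subst_word erase_a_rename_b w)"
    using lam_first_two_adj_iff[OF la, of 0] by simp
  ultimately have c': "c' = 1"
    using hb cw c by (auto simp: erase_b_def erase_a_rename_b_def)
  have "\<not> 2 \<le> count_list (subst_word erase_b w) 1"
    and "2 \<le> count_list (subst_word erase_b w) 0"
    and "2 \<le> count_list (subst_word erase_a_rename_b w) 0"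
    using lam_count_ge2_iff[OF lb, of 1] lam_count_ge2_iff[OF lb, of 0]
      lam_count_ge2_iff[OF la, of 0] \<open>2 \<le> k\<close> \<open>1 \<le> m\<close>
    by (simp_all add: count_list_replicate)
  then have "\<not> 2 \<le> count_list w 1" and "2 \<le> count_list w 0" and "2 \<le> count_list w 2"
    by (simp_all only: count_list_erase_b count_list_erase_a_rename_b) simp_all
  then have "count_list u 1 = 0" and "2 \<le> count_list u 0" and "1 \<le> count_list u 2"
    by (simp_all add: cw cu c c')
  moreover have "set u \<subseteq> {0, 2}"
    using w \<open>count_list u 1 = 0\<close> by (auto simp: cw cu count_list_0_iff)
  ultimately show thesis
    using that cw cu c c' by blast
qed

context xtx_theory
begin

lemma escape_from_btab_plus_imp_target:
  assumes "variety_contains E (M_lam {ata_plus})" and "(L, w) \<in> E"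
    and "L \<in> btab_plus" and "w \<notin> btab_plus"
  shows "([2, 1, 0, 0, 2], [2, 1, 0, 0, 2, 0, 2]) \<in> E"
proof -
  obtain k m where L: "L = [2, 1] @ replicate k 0 @ replicate m 2" and "2 \<le> k" "1 \<le> m"
    using assms(3) unfolding btab_plus_def by blast
  have "is_factor_in L btab_plus"
    using assms(3) unfolding is_factor_in_def by (metis append_Nil append_Nil2)
  then have "set w \<subseteq> set L"
    and "lam (subst_word erase_b L) (subst_word erase_b w)"
    and "lam (subst_word erase_a_rename_b L) (subst_word erase_a_rename_b w)"
    using erasures_lam_if_M_lam_ata_plus[OF assms(1,2)] btab_factor_shape_if_is_factor by blast+
  then have "set w \<subseteq> {0, 1, 2}"
    and "lam (1 # replicate k 0) (subst_word erase_b w)"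
    and "lam (0 # 1 # replicate m 0) (subst_word erase_a_rename_b w)"
    by (auto simp: L erase_b_def erase_a_rename_b_def set_replicate_conv_if split: if_splits)
  then obtain u where u: "w = 2 # 1 # u" "set u \<subseteq> {0, 2}"
    and "2 \<le> count_list u 0" "1 \<le> count_list u 2"
    using erasures_lam_btab_word_imp \<open>2 \<le> k\<close> \<open>1 \<le> m\<close> by blast
  have "\<not> sorted u"
  proof
    assume "sorted u"
    then obtain i j where "u = replicate i 0 @ replicate j 2"
      using sorted_two_letters_eq_replicate[of u 0 2] u(2) by auto
    then have "w \<in> btab_plus"
      using u(1) \<open>2 \<le> count_list u 0\<close> \<open>1 \<le> count_list u 2\<close>
      unfolding btab_plus_def by (auto simp: count_list_replicate)
    then show False
      using assms(4) by simp
  qed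
  then show ?thesis
    using btab_identity_imp_target[of k m u] assms(2) L u \<open>1 \<le> m\<close> by simp
qed

end

theorem lemma4p3:
  fixes E :: "(word \<times> word) set"
  assumes "equational_theory E"
    and "([0, 1, 0], [0, 1, 0, 0]) \<in> E"
    and "variety_contains E (M_lam {ata_plus})"
    and "\<not> variety_contains E (M_lam {btab_plus})"
  shows "([0, 1, 2, 2, 0], [0, 1, 2, 2, 0, 2, 0]) \<in> E"
proof -
  interpret xtx_theory E
    using assms(1,2) by unfold_locales
  obtain x y where xy: "(x, y) \<in> E" and x: "is_factor_in x btab_plus"
    and "\<not> (is_factor_in y btab_plus \<and> lam x y)"
    using not_variety_contains_M_lam[OF assms(1,4)[unfolded btab_plus_eq_lam_class]]
    unfolding btab_plus_eq_lam_class by blast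
  then have "\<not> is_factor_in y btab_plus"
    using lam_if_btab_factors_identity[OF assms(3) xy x] by blast
  moreover obtain p s where "p @ x @ s \<in> btab_plus"
    using x unfolding is_factor_in_def by blast
  ultimately have "([2, 1, 0, 0, 2], [2, 1, 0, 0, 2, 0, 2]) \<in> E"
    using escape_from_btab_plus_imp_target[OF assms(3) E_append[OF xy]]
    unfolding is_factor_in_def by blast
  from E_subst[OF this, of "\<lambda>z. if z = 0 then [2] else if z = 2 then [0] else [z]"]
  show ?thesis
    by simp
qed

end
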